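(* Every finite non-empty word $W$ over a $2$-letter alphabet satisfies $r(W)=1$, i.e., $W$ has exactly one square-free reduct.
   Context: A square is a finite non-empty word of the form $XX$. A word is square-free if it has no factor that is a square. If a word has the form $W=UXXV$ with $X$ non-empty, replacing it by $UXV$ is called a square reduction. A reduct of $W$ is any square-free word obtainable from $W$ by a finite sequence (possibly empty) of square reductions. $r(W)$ denotes the number of distinct reducts of $W$. *)

theory Defs
  imports Main
begin

definition square_free :: "'a list \<Rightarrow> bool" where
  "square_free w \<longleftrightarrow> \<not> (\<exists>u x v. x \<noteq> [] \<and> w = u @ x @ x @ v)"

definition square_reduction :: "'a list \<Rightarrow> 'a list \<Rightarrow> bool" where
  "square_reduction w w' \<longleftrightarrow> (\<exists>u x v. x \<noteq> [] \<and> w = u @ x @ x @ v \<and> w' = u @ x @ v)"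

definition reducts :: "'a list \<Rightarrow> 'a list set" where
  "reducts W = {w. square_reduction\<^sup>*\<^sup>* W w \<and> square_free w}"

definition r :: "'a list \<Rightarrow> nat" where
  "r W = card (reducts W)"

end

theory Submission
  imports Defs
begin

text \<open>A square reduction keeps the first letter, the last letter and the set of letters of a
word. Over two letters a square-free word has no factor \<open>cc\<close> and hence alternates; an
alternating word of length four is a square, so the non-empty square-free binary words are
\<open>a, b, ab, ba, aba, bab\<close>, and these are told apart by first letter, last letter and set of
letters. Hence all reducts of a binary word coincide, and there is at least one because
reductions shorten the word.\<close>

lemma square_free_adjacent_distinct:
  assumes "square_free w" "Suc i < length w"
  shows "w ! i \<noteq> w ! Suc i"
proof
  assume "w ! i = w ! Suc i"
  moreover have "w = take i w @ [w ! i] @ [w ! Suc i] @ drop (Suc (Suc i)) w"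
    using assms(2) by (simp add: Cons_nth_drop_Suc)
  ultimately show False
    using assms(1) unfolding square_free_def by (metis list.distinct(1))
qed

lemma square_free_two_letters_length:
  assumes "square_free w" "set w \<subseteq> {a, b}"
  shows "length w \<le> 3"
proof (rule ccontr)
  assume "\<not> length w \<le> 3"
  then obtain x1 x2 x3 x4 rest where w: "w = x1 # x2 # x3 # x4 # rest"
    by (metis Suc_le_length_iff numeral_3_eq_3 not_less_eq_eq)
  have "x1 \<noteq> x2" "x2 \<noteq> x3" "x3 \<noteq> x4"
    using square_free_adjacent_distinct[OF assms(1), of 0]
      square_free_adjacent_distinct[OF assms(1), of 1]
      square_free_adjacent_distinct[OF assms(1), of 2]
    by (simp_all add: w numeral_2_eq_2)
  with assms(2) have "x1 = x3" "x2 = x4"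
    by (auto simp: w)
  then have "w = [] @ [x1, x2] @ [x1, x2] @ rest"
    by (simp add: w)
  with assms(1) show False
    unfolding square_free_def by blast
qed

lemma square_free_two_letters_cases:
  assumes "square_free w" "set w \<subseteq> {a, b}" "w \<noteq> []"
  shows "w \<in> {[a], [b], [a, b], [b, a], [a, b, a], [b, a, b]}"
proof -
  have "length w \<le> 3"
    using assms(1,2) by (rule square_free_two_letters_length)
  with assms(3) obtain x1 xs where w: "w = x1 # xs" "length xs \<le> 2"
    by (cases w) auto
  consider "xs = []" | x2 where "xs = [x2]" | x2 x3 where "xs = [x2, x3]"
    using w(2) by (auto simp: le_Suc_eq length_Suc_conv numeral_2_eq_2)
  then show ?thesis
    using assms(2) square_free_adjacent_distinct[OF assms(1), of 0]
      square_free_adjacent_distinct[OF assms(1), of 1]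
    by cases (auto simp: w)
qed

lemma square_free_two_letters_eqI:
  assumes "square_free w" "square_free w'" "set w \<subseteq> {a, b}" "w \<noteq> []"
    and "hd w' = hd w" "last w' = last w" "set w' = set w"
  shows "w' = w"
proof -
  have "w' \<noteq> []" "set w' \<subseteq> {a, b}"
    using assms(3,4,7) by auto
  then show ?thesis
    using assms square_free_two_letters_cases[of w a b] square_free_two_letters_cases[of w' a b]
      square_free_adjacent_distinct[OF assms(1), of 0]
      square_free_adjacent_distinct[OF assms(2), of 0]
    by (cases "a = b") (auto simp: insert_commute)
qed

lemma square_reduction_invariants:
  assumes "square_reduction w w'"
  shows "hd w' = hd w" "last w' = last w" "set w' = set w" "length w' < length w"
  using assms unfolding square_reduction_def by (auto simp: hd_append last_append)

lemma square_reductions_invariants: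
  assumes "square_reduction\<^sup>*\<^sup>* w w'"
  shows "hd w' = hd w" "last w' = last w" "set w' = set w"
  using assms by (induction rule: rtranclp_induct) (auto dest: square_reduction_invariants)

lemma reducts_nonempty: "reducts w \<noteq> {}"
proof (induction "length w" arbitrary: w rule: less_induct)
  case less
  show ?case
  proof (cases "square_free w")
    case True
    then show ?thesis unfolding reducts_def by blast
  next
    case False
    then obtain u x v where "x \<noteq> []" "w = u @ x @ x @ v"
      unfolding square_free_def by blast
    then have step: "square_reduction w (u @ x @ v)"
      unfolding square_reduction_def by blast
    then have "reducts (u @ x @ v) \<noteq> {}"
      using less square_reduction_invariants(4) by blast
    then show ?thesis
      using step unfolding reducts_def by (auto intro: converse_rtranclp_into_rtranclp)
  qed
qed

lemma reducts_two_letters_unique: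
  assumes "set W \<subseteq> {a, b}" "W \<noteq> []" "w \<in> reducts W" "w' \<in> reducts W"
  shows "w' = w"
proof (rule square_free_two_letters_eqI)
  have "square_reduction\<^sup>*\<^sup>* W w" "square_reduction\<^sup>*\<^sup>* W w'"
    using assms(3,4) unfolding reducts_def by auto
  then show "hd w' = hd w" "last w' = last w" "set w' = set w" "set w \<subseteq> {a, b}" "w \<noteq> []"
    using assms(1,2) square_reductions_invariants by (metis set_empty)+
  show "square_free w" "square_free w'"
    using assms(3,4) unfolding reducts_def by auto
qed

theorem proposition2p1:
  fixes A :: "'a set" and W :: "'a list"
  assumes "card A = 2" and "set W \<subseteq> A" and "W \<noteq> []"
  shows "r W = 1"
proof -
  obtain a b where "A = {a, b}"
    using assms(1) card_2_iff by metis
  with assms(2,3) have "is_singleton (reducts W)"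
    by (intro is_singletonI' reducts_nonempty reducts_two_letters_unique) auto
  then show ?thesis
    unfolding r_def by (simp add: is_singleton_altdef)
qed

end
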